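(* Let $S^0$ be an adequate semigroup with semilattice of idempotents $E^0$, let $I$ be a left regular band having $E^0$ as a semilattice transversal, and suppose there is a left action $(x,e)\mapsto x\ast e$ of $S^0$ on $I$ (so $(xy)\ast e=x\ast(y\ast e)$) with $x\ast(ef)=(x\ast e)(x\ast f)$ for all $x\in S^0$, $e,f\in I$. Let $W=\{(e,x)\in I\times S^0: e\in L_{x^+}\}$ with multiplication $(e,x)(g,y)=(e(x\ast g),xy)$, and suppose that $x\ast y^+=(xy)^+$ for all $x,y\in S^0$. Then: 1. for all $x,y\in S^0$ and $f\in L_{y^+}$, $x\ast f\in L_{(xy)^+}$; 2. $E(W)=\{(e,x)\in W: x\in E^0\}$; 3. $E(W)$ is a band.
   Context: For a semigroup $T$, $E(T)$ is its set of idempotents. In an adequate semigroup (abundant, i.e. every $\mathcal{R}^\ast$- and $\mathcal{L}^\ast$-class contains an idempotent, with commuting idempotents) $x^+$ denotes the unique idempotent $\mathcal{R}^\ast$-related to $x$, where $a\,\mathcal{R}^\ast\,b$ iff $xa=ya\Leftrightarrow xb=yb$ for all $x,y\in T^1$. A left regular band satisfies $xyx=xy$; $E^0$ is a semilattice transversal of $I$ if $E^0$ is a subsemilattice of $I$ and each element of $I$ has exactly one inverse in $E^0$. For $x\in E^0$, $L_x$ is the $\mathcal{L}$-class of $x$ in $I$. *)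

theory Defs
  imports Main
begin

definition semigroup_on :: "'a set \<Rightarrow> ('a \<Rightarrow> 'a \<Rightarrow> 'a) \<Rightarrow> bool" where
  "semigroup_on A m \<longleftrightarrow> (\<forall>x\<in>A. \<forall>y\<in>A. m x y \<in> A) \<and>
     (\<forall>x\<in>A. \<forall>y\<in>A. \<forall>z\<in>A. m (m x y) z = m x (m y z))"

definition idems :: "'a set \<Rightarrow> ('a \<Rightarrow> 'a \<Rightarrow> 'a) \<Rightarrow> 'a set" where
  "idems A m = {e\<in>A. m e e = e}"

(* elements of T^1: None is the adjoined identity *)
definition carrier1 :: "'a set \<Rightarrow> 'a option set" where
  "carrier1 A = Some ` A \<union> {None}"

fun lmult1 :: "('a \<Rightarrow> 'a \<Rightarrow> 'a) \<Rightarrow> 'a option \<Rightarrow> 'a \<Rightarrow> 'a" where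
  "lmult1 m None a = a"
| "lmult1 m (Some x) a = m x a"

fun rmult1 :: "('a \<Rightarrow> 'a \<Rightarrow> 'a) \<Rightarrow> 'a \<Rightarrow> 'a option \<Rightarrow> 'a" where
  "rmult1 m a None = a"
| "rmult1 m a (Some x) = m a x"

definition Rstar :: "'a set \<Rightarrow> ('a \<Rightarrow> 'a \<Rightarrow> 'a) \<Rightarrow> 'a \<Rightarrow> 'a \<Rightarrow> bool" where
  "Rstar A m a b \<longleftrightarrow> a \<in> A \<and> b \<in> A \<and>
     (\<forall>x\<in>carrier1 A. \<forall>y\<in>carrier1 A. lmult1 m x a = lmult1 m y a \<longleftrightarrow> lmult1 m x b = lmult1 m y b)"

definition Lstar :: "'a set \<Rightarrow> ('a \<Rightarrow> 'a \<Rightarrow> 'a) \<Rightarrow> 'a \<Rightarrow> 'a \<Rightarrow> bool" where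
  "Lstar A m a b \<longleftrightarrow> a \<in> A \<and> b \<in> A \<and>
     (\<forall>x\<in>carrier1 A. \<forall>y\<in>carrier1 A. rmult1 m a x = rmult1 m a y \<longleftrightarrow> rmult1 m b x = rmult1 m b y)"

definition abundant :: "'a set \<Rightarrow> ('a \<Rightarrow> 'a \<Rightarrow> 'a) \<Rightarrow> bool" where
  "abundant A m \<longleftrightarrow> (\<forall>a\<in>A. (\<exists>e\<in>idems A m. Rstar A m a e) \<and> (\<exists>f\<in>idems A m. Lstar A m a f))"

definition adequate :: "'a set \<Rightarrow> ('a \<Rightarrow> 'a \<Rightarrow> 'a) \<Rightarrow> bool" where
  "adequate A m \<longleftrightarrow> semigroup_on A m \<and> abundant A m \<and>
     (\<forall>e\<in>idems A m. \<forall>f\<in>idems A m. m e f = m f e)"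

definition plus :: "'a set \<Rightarrow> ('a \<Rightarrow> 'a \<Rightarrow> 'a) \<Rightarrow> 'a \<Rightarrow> 'a" where
  "plus A m x = (THE e. e \<in> idems A m \<and> Rstar A m x e)"

definition band_on :: "'a set \<Rightarrow> ('a \<Rightarrow> 'a \<Rightarrow> 'a) \<Rightarrow> bool" where
  "band_on A m \<longleftrightarrow> semigroup_on A m \<and> (\<forall>x\<in>A. m x x = x)"

definition left_regular_band :: "'a set \<Rightarrow> ('a \<Rightarrow> 'a \<Rightarrow> 'a) \<Rightarrow> bool" where
  "left_regular_band A m \<longleftrightarrow> band_on A m \<and> (\<forall>x\<in>A. \<forall>y\<in>A. m (m x y) x = m x y)"

definition Lrel :: "'a set \<Rightarrow> ('a \<Rightarrow> 'a \<Rightarrow> 'a) \<Rightarrow> 'a \<Rightarrow> 'a \<Rightarrow> bool" where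
  "Lrel A m a b \<longleftrightarrow> a \<in> A \<and> b \<in> A \<and>
     (\<exists>x\<in>carrier1 A. a = lmult1 m x b) \<and> (\<exists>y\<in>carrier1 A. b = lmult1 m y a)"

definition Lclass :: "'a set \<Rightarrow> ('a \<Rightarrow> 'a \<Rightarrow> 'a) \<Rightarrow> 'a \<Rightarrow> 'a set" where
  "Lclass A m x = {a. Lrel A m a x}"

definition is_inverse :: "('a \<Rightarrow> 'a \<Rightarrow> 'a) \<Rightarrow> 'a \<Rightarrow> 'a \<Rightarrow> bool" where
  "is_inverse m a b \<longleftrightarrow> m (m a b) a = a \<and> m (m b a) b = b"

definition semilattice_transversal :: "'a set \<Rightarrow> 'a set \<Rightarrow> ('a \<Rightarrow> 'a \<Rightarrow> 'a) \<Rightarrow> bool" where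
  "semilattice_transversal E I m \<longleftrightarrow> E \<subseteq> I \<and>
     (\<forall>e\<in>E. \<forall>f\<in>E. m e f \<in> E \<and> m e f = m f e) \<and>
     (\<forall>a\<in>I. \<exists>!b. b \<in> E \<and> is_inverse m a b)"

definition Wset :: "'a set \<Rightarrow> ('a \<Rightarrow> 'a \<Rightarrow> 'a) \<Rightarrow> 'a set \<Rightarrow> ('a \<Rightarrow> 'a \<Rightarrow> 'a) \<Rightarrow> ('a \<times> 'a) set" where
  "Wset S mS I mI = {(e, x). e \<in> I \<and> x \<in> S \<and> e \<in> Lclass I mI (plus S mS x)}"

definition Wmult :: "('a \<Rightarrow> 'a \<Rightarrow> 'a) \<Rightarrow> ('a \<Rightarrow> 'a \<Rightarrow> 'a) \<Rightarrow> ('a \<Rightarrow> 'a \<Rightarrow> 'a)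
    \<Rightarrow> 'a \<times> 'a \<Rightarrow> 'a \<times> 'a \<Rightarrow> 'a \<times> 'a" where
  "Wmult mS mI act p q = (mI (fst p) (act (snd p) (fst q)), mS (snd p) (snd q))"

end

theory Submission
  imports Defs
begin

text \<open>In a band, \<open>a \<L> b\<close> holds iff \<open>ab = a\<close> and \<open>ba = b\<close>; hence each \<open>x \<ast> -\<close>, being an
  endomorphism of \<open>I\<close>, preserves \<open>\<L>\<close>, and \<open>x \<ast> y\<^sup>+ = (xy)\<^sup>+\<close> gives (1). For an idempotent \<open>x\<close>
  we have \<open>x\<^sup>+ = x = x \<ast> x\<close>, so for \<open>e \<L> x\<close> also \<open>x \<ast> e \<L> x\<close>, whence \<open>e (x \<ast> e) = e\<close>: this is
  the nontrivial half of (2). Since \<open>E\<^sup>0\<close> is a semilattice, \<open>\<L>\<close>-classes of its elements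
  multiply as in \<open>E\<^sup>0\<close>, which keeps \<open>E(W)\<close> closed; associativity of \<open>W\<close> comes from the
  action being by endomorphisms.\<close>

lemma plus_idem:
  assumes comm: "\<forall>e\<in>idems S m. \<forall>f\<in>idems S m. m e f = m f e"
    and x: "x \<in> idems S m"
  shows "plus S m x = x"
  unfolding plus_def
proof (rule the_equality)
  have "x \<in> S" using x by (simp add: idems_def)
  then show "x \<in> idems S m \<and> Rstar S m x x" using x by (simp add: Rstar_def)
next
  fix e assume e: "e \<in> idems S m \<and> Rstar S m x e"
  have xS: "x \<in> S" and xx: "m x x = x" using x by (auto simp: idems_def)
  have eS: "e \<in> S" and ee: "m e e = e" and R: "Rstar S m x e" using e by (auto simp: idems_def)
  have c1: "Some x \<in> carrier1 S" "None \<in> carrier1 S" "Some e \<in> carrier1 S"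
    using xS eS by (auto simp: carrier1_def)
  \<comment> \<open>test R* against the multiplier pairs (x, 1) and (e, 1)\<close>
  have "m x e = e" using R c1 xx unfolding Rstar_def by (metis lmult1.simps)
  moreover have "m e x = x" using R c1 ee unfolding Rstar_def by (metis lmult1.simps)
  moreover have "m x e = m e x" using comm x e by blast
  ultimately show "e = x" by simp
qed

lemma idems_mult_closed:
  assumes "semigroup_on S m" and comm: "\<forall>e\<in>idems S m. \<forall>f\<in>idems S m. m e f = m f e"
    and x: "x \<in> idems S m" and y: "y \<in> idems S m"
  shows "m x y \<in> idems S m"
proof -
  have xS: "x \<in> S" "m x x = x" and yS: "y \<in> S" "m y y = y" using x y by (auto simp: idems_def)
  have assoc: "\<And>a b c. a \<in> S \<Longrightarrow> b \<in> S \<Longrightarrow> c \<in> S \<Longrightarrow> m (m a b) c = m a (m b c)"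
    and xyS: "m x y \<in> S" using assms(1) xS yS by (auto simp: semigroup_on_def)
  have "m (m x y) (m x y) = m x (m (m y x) y)" using assoc xS yS xyS by simp
  also have "\<dots> = m x (m x y)" using comm x y assoc yS xS by metis
  also have "\<dots> = m x y" using assoc xS yS by metis
  finally show ?thesis using xyS by (simp add: idems_def)
qed

lemma band_lmult1_absorb:
  assumes "band_on I m" "c \<in> carrier1 I" "b \<in> I"
  shows "m (lmult1 m c b) b = lmult1 m c b"
  using assms by (cases c) (auto simp: band_on_def semigroup_on_def carrier1_def)

lemma band_Lrel_iff:
  assumes "band_on I m"
  shows "Lrel I m a b \<longleftrightarrow> a \<in> I \<and> b \<in> I \<and> m a b = a \<and> m b a = b"
proof
  assume "Lrel I m a b"
  then obtain c d where "a \<in> I" "b \<in> I" "c \<in> carrier1 I" "d \<in> carrier1 I"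
    and "a = lmult1 m c b" "b = lmult1 m d a"
    unfolding Lrel_def by blast
  then show "a \<in> I \<and> b \<in> I \<and> m a b = a \<and> m b a = b"
    using band_lmult1_absorb[OF assms] by metis
next
  assume "a \<in> I \<and> b \<in> I \<and> m a b = a \<and> m b a = b"
  then show "Lrel I m a b"
    unfolding Lrel_def carrier1_def by (metis Un_iff image_eqI lmult1.simps(2))
qed

lemma band_endo_preserves_Lrel:
  assumes "band_on I m"
    and closed: "\<forall>e\<in>I. \<phi> e \<in> I"
    and hom: "\<forall>e\<in>I. \<forall>f\<in>I. \<phi> (m e f) = m (\<phi> e) (\<phi> f)"
    and "Lrel I m a b"
  shows "Lrel I m (\<phi> a) (\<phi> b)"
proof -
  have ab: "a \<in> I" "b \<in> I" "m a b = a" "m b a = b"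
    using assms by (auto simp: band_Lrel_iff)
  then have "m (\<phi> a) (\<phi> b) = \<phi> a" "m (\<phi> b) (\<phi> a) = \<phi> b"
    using hom by metis+
  then show ?thesis using ab closed assms(1) by (simp add: band_Lrel_iff)
qed

lemma band_Lrel_mult_eq:
  assumes "band_on I m" "Lrel I m a u" "Lrel I m b u"
  shows "m a b = a"
proof -
  have "a \<in> I" "b \<in> I" "u \<in> I" "m a u = a" "m u b = u"
    using assms by (auto simp: band_Lrel_iff)
  then have "m a b = m a (m u b)"
    using assms(1) by (metis band_on_def semigroup_on_def)
  then show ?thesis using \<open>m u b = u\<close> \<open>m a u = a\<close> by simp
qed

lemma band_Lrel_mult:
  assumes band: "band_on I m" and "Lrel I m e x" "Lrel I m k u" "x \<in> I" and ux: "m u x = u"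
  shows "Lrel I m (m e k) u"
proof -
  have I: "e \<in> I" "k \<in> I" "u \<in> I" and ex: "m x e = x" and ku: "m k u = k" "m u k = u"
    using assms by (auto simp: band_Lrel_iff)
  have assoc: "\<And>a b c. a \<in> I \<Longrightarrow> b \<in> I \<Longrightarrow> c \<in> I \<Longrightarrow> m (m a b) c = m a (m b c)"
    and ekI: "m e k \<in> I" using band I by (auto simp: band_on_def semigroup_on_def)
  have "m (m e k) u = m e k" using assoc I ku by simp
  moreover have "m u (m e k) = u"
  proof -
    have "m u e = m u (m x e)" using assoc I ux \<open>x \<in> I\<close> by metis
    then have "m u e = u" using ex ux by simp
    then show ?thesis using assoc I ku by metis
  qed
  ultimately show ?thesis using ekI I band by (simp add: band_Lrel_iff)
qed

locale W_construction =
  fixes S I :: "'a set" and mS mI act :: "'a \<Rightarrow> 'a \<Rightarrow> 'a"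
  assumes adeq: "adequate S mS"
    and lrb: "left_regular_band I mI"
    and transv: "semilattice_transversal (idems S mS) I mI"
    and sub: "\<forall>e\<in>idems S mS. \<forall>f\<in>idems S mS. mI e f = mS e f"
    and act_closed: "\<forall>x\<in>S. \<forall>e\<in>I. act x e \<in> I"
    and act_assoc: "\<forall>x\<in>S. \<forall>y\<in>S. \<forall>e\<in>I. act (mS x y) e = act x (act y e)"
    and act_hom: "\<forall>x\<in>S. \<forall>e\<in>I. \<forall>f\<in>I. act x (mI e f) = mI (act x e) (act x f)"
    and act_plus: "\<forall>x\<in>S. \<forall>y\<in>S. act x (plus S mS y) = plus S mS (mS x y)"
begin

abbreviation "W \<equiv> Wset S mS I mI"
abbreviation "EW \<equiv> idems W (Wmult mS mI act)"

lemma band_I: "band_on I mI"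
  using lrb by (simp add: left_regular_band_def)

lemma semigroup_S: "semigroup_on S mS"
  using adeq by (simp add: adequate_def)

lemma idems_comm: "\<forall>e\<in>idems S mS. \<forall>f\<in>idems S mS. mS e f = mS f e"
  using adeq by (simp add: adequate_def)

lemma idems_subset_I: "idems S mS \<subseteq> I"
  using transv by (simp add: semilattice_transversal_def)

lemma plus_idems: "x \<in> idems S mS \<Longrightarrow> plus S mS x = x"
  using plus_idem[OF idems_comm] .

lemma Lrel_act:
  assumes "x \<in> S" "Lrel I mI a b"
  shows "Lrel I mI (act x a) (act x b)"
  using band_endo_preserves_Lrel[OF band_I] act_closed act_hom assms by blast

lemma act_Lclass_plus:
  assumes "x \<in> S" "y \<in> S" "f \<in> Lclass I mI (plus S mS y)"
  shows "act x f \<in> Lclass I mI (plus S mS (mS x y))"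
proof -
  have "Lrel I mI (act x f) (act x (plus S mS y))"
    using Lrel_act assms by (simp add: Lclass_def)
  then show ?thesis using act_plus assms by (simp add: Lclass_def)
qed

lemma idems_W: "EW = {(e, x) \<in> W. x \<in> idems S mS}"
proof (intro set_eqI iffI)
  fix p assume "p \<in> EW"
  then obtain e x where p: "p = (e, x)" "(e, x) \<in> W" and "mS x x = x"
    by (cases p) (auto simp: idems_def Wmult_def)
  then show "p \<in> {(e, x) \<in> W. x \<in> idems S mS}"
    by (auto simp: idems_def Wset_def)
next
  fix p assume "p \<in> {(e, x) \<in> W. x \<in> idems S mS}"
  then obtain e x where p: "p = (e, x)" "(e, x) \<in> W" and x: "x \<in> idems S mS" by auto
  have xS: "x \<in> S" and xx: "mS x x = x" using x by (auto simp: idems_def)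
  have eL: "Lrel I mI e x" using p plus_idems[OF x] by (simp add: Wset_def Lclass_def)
  have "act x x = x" using act_plus xS plus_idems[OF x] xx by metis
  then have "Lrel I mI (act x e) x" using Lrel_act[OF xS eL] by simp
  then have "mI e (act x e) = e" using band_Lrel_mult_eq[OF band_I eL] by simp
  then show "p \<in> EW" using p xx by (simp add: idems_def Wmult_def)
qed

lemma Wmult_assoc:
  assumes "e \<in> I" "x \<in> S" "g \<in> I" "y \<in> S" "h \<in> I" "z \<in> S"
  shows "Wmult mS mI act (Wmult mS mI act (e, x) (g, y)) (h, z)
       = Wmult mS mI act (e, x) (Wmult mS mI act (g, y) (h, z))"
proof -
  have I: "act x g \<in> I" "act y h \<in> I" "act x (act y h) \<in> I" using act_closed assms by auto
  have "mI (mI e (act x g)) (act (mS x y) h) = mI e (mI (act x g) (act x (act y h)))"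
    using act_assoc band_I I assms by (simp add: band_on_def semigroup_on_def)
  also have "\<dots> = mI e (act x (mI g (act y h)))" using act_hom I assms by simp
  finally show ?thesis using semigroup_S assms by (simp add: Wmult_def semigroup_on_def)
qed

lemma Wmult_idems_closed:
  assumes "(e, x) \<in> EW" "(g, y) \<in> EW"
  shows "Wmult mS mI act (e, x) (g, y) \<in> EW"
proof -
  have x: "x \<in> idems S mS" and ex: "(e, x) \<in> W"
    and y: "y \<in> idems S mS" and gy: "(g, y) \<in> W"
    using assms by (auto simp: idems_W)
  have xS: "x \<in> S" and eL: "Lrel I mI e x"
    using ex plus_idems[OF x] by (auto simp: Wset_def Lclass_def)
  have yS: "y \<in> S" and gL: "g \<in> Lclass I mI (plus S mS y)"
    using gy by (auto simp: Wset_def)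
  have xy: "mS x y \<in> idems S mS"
    using idems_mult_closed[OF semigroup_S idems_comm x y] .
  have xyS: "mS x y \<in> S" using xy by (simp add: idems_def)
  have kL: "Lrel I mI (act x g) (mS x y)"
    using act_Lclass_plus[OF xS yS gL] plus_idems[OF xy] by (simp add: Lclass_def)
  have xI: "x \<in> I" and yI: "y \<in> I" using x y idems_subset_I by auto
  have yx: "mS x y = mI y x" using sub idems_comm x y by metis
  have "mI (mI y x) x = mI y x"
    using band_I xI yI by (simp add: band_on_def semigroup_on_def)
  then have "mI (mS x y) x = mS x y" using yx by simp
  then have "Lrel I mI (mI e (act x g)) (mS x y)"
    using band_Lrel_mult[OF band_I eL kL xI] by simp
  then have "(mI e (act x g), mS x y) \<in> W"
    using xyS plus_idems[OF xy] band_I by (simp add: Wset_def Lclass_def band_Lrel_iff)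
  then show ?thesis using xy by (simp add: idems_W Wmult_def)
qed

lemma band_idems_W: "band_on EW (Wmult mS mI act)"
  unfolding band_on_def semigroup_on_def
proof (intro conjI ballI)
  fix p q assume "p \<in> EW" "q \<in> EW"
  then show "Wmult mS mI act p q \<in> EW" using Wmult_idems_closed by (cases p, cases q) simp
next
  fix p q r assume "p \<in> EW" "q \<in> EW" "r \<in> EW"
  then show "Wmult mS mI act (Wmult mS mI act p q) r = Wmult mS mI act p (Wmult mS mI act q r)"
    using Wmult_assoc by (cases p, cases q, cases r) (auto simp: idems_def Wset_def)
qed (simp add: idems_def)

end

theorem lemma3p1:
  fixes S I :: "'a set" and mS mI act :: "'a \<Rightarrow> 'a \<Rightarrow> 'a"
  assumes adeq: "adequate S mS"
    and lrb: "left_regular_band I mI"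
    and transv: "semilattice_transversal (idems S mS) I mI"
    and sub: "\<forall>e\<in>idems S mS. \<forall>f\<in>idems S mS. mI e f = mS e f"
    and act_closed: "\<forall>x\<in>S. \<forall>e\<in>I. act x e \<in> I"
    and act_assoc: "\<forall>x\<in>S. \<forall>y\<in>S. \<forall>e\<in>I. act (mS x y) e = act x (act y e)"
    and act_hom: "\<forall>x\<in>S. \<forall>e\<in>I. \<forall>f\<in>I. act x (mI e f) = mI (act x e) (act x f)"
    and act_plus: "\<forall>x\<in>S. \<forall>y\<in>S. act x (plus S mS y) = plus S mS (mS x y)"
  shows "(\<forall>x\<in>S. \<forall>y\<in>S. \<forall>f\<in>Lclass I mI (plus S mS y).
            act x f \<in> Lclass I mI (plus S mS (mS x y)))
       \<and> idems (Wset S mS I mI) (Wmult mS mI act) = {(e, x) \<in> Wset S mS I mI. x \<in> idems S mS}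
       \<and> band_on (idems (Wset S mS I mI) (Wmult mS mI act)) (Wmult mS mI act)"
proof -
  interpret W_construction S I mS mI act
    using assms by unfold_locales
  show ?thesis using act_Lclass_plus idems_W band_idems_W by blast
qed

end
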